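(* Let $n\ge0$ and $i,j\in D$. Suppose that for $m=1,\dots,r$ we are given $a_m,b_m\in D$ with $a_m\neq b_m$, $a_m\Rightarrow_n b_m$ and $A_i(a_m)=1$, and that $A_i(c)\le A_j(c)$ for all $c\notin\{a_m: m=1,\dots,r\}$. Define $\hat A_i\in\{0,1\}^D$ by $\hat A_i(c)=A_i(c)$ if $c\notin\{a_m,b_m: m=1,\dots,r\}$, $\hat A_i(c)=0$ if $c=a_m$ for some $m$, and $\hat A_i(c)=1$ if $c=b_m$ for some $m$. If $\hat A_i\le A_j$ entrywise, then $i\Rightarrow_{n+1} j$.
   Context: Fix integers $k\ge1$, $d\ge1$, $K=\{1,\dots,k\}$, $D=\{1,\dots,d\}$. The $k$-tree is the set $K^*$ of finite words over $K$ with root the empty word $\epsilon$; $xg$ ($g\in K$) are the children of $x$. $L_n$ is the set of words of length exactly $n$ and $\Delta_n$ the set of words of length at most $n$. $A$ is a $d\times d$ matrix with entries in $\{0,1\}$, and $A_i(m)=A(i,m)$ denotes the entries of row $i$. A (valid) labeling of $\Delta_n$ is a map $\lambda:\Delta_n\to D$ with $A(\lambda(x),\lambda(xg))=1$ for all $x\in\Delta_{n-1}$, $g\in K$. For $p,q\in D$, $p\Rightarrow_n q$ means: for every valid labeling $\lambda$ of $\Delta_n$ with $\lambda(\epsilon)=p$ there is a valid labeling $\lambda'$ of $\Delta_n$ with $\lambda'(\epsilon)=q$ and $\lambda'|_{L_n}=\lambda|_{L_n}$. *)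

theory Defs
  imports Main
begin

text \<open>Words over K = {1..k} are lists of naturals with entries in {1..k};
  the children of x are x @ [g].  The 0/1 matrix A is encoded as a
  boolean function: A p q holds iff A(p,q) = 1.\<close>

definition Lwords :: "nat \<Rightarrow> nat \<Rightarrow> nat list set" where
  "Lwords k n = {x. length x = n \<and> set x \<subseteq> {1..k}}"

definition Delta :: "nat \<Rightarrow> nat \<Rightarrow> nat list set" where
  "Delta k n = {x. length x \<le> n \<and> set x \<subseteq> {1..k}}"

definition valid_labeling ::
  "nat \<Rightarrow> nat \<Rightarrow> (nat \<Rightarrow> nat \<Rightarrow> bool) \<Rightarrow> nat \<Rightarrow> (nat list \<Rightarrow> nat) \<Rightarrow> bool" where
  "valid_labeling k d A n lam \<longleftrightarrow>
     (\<forall>x\<in>Delta k n. lam x \<in> {1..d}) \<and>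
     (\<forall>x. length x < n \<and> set x \<subseteq> {1..k} \<longrightarrow>
          (\<forall>g\<in>{1..k}. A (lam x) (lam (x @ [g]))))"

definition implies_n ::
  "nat \<Rightarrow> nat \<Rightarrow> (nat \<Rightarrow> nat \<Rightarrow> bool) \<Rightarrow> nat \<Rightarrow> nat \<Rightarrow> nat \<Rightarrow> bool" where
  "implies_n k d A n p q \<longleftrightarrow>
     (\<forall>lam. valid_labeling k d A n lam \<and> lam [] = p \<longrightarrow>
        (\<exists>lam'. valid_labeling k d A n lam' \<and> lam' [] = q \<and>
                (\<forall>x\<in>Lwords k n. lam' x = lam x)))"

text \<open>The modified row \<open>\<hat>A_i\<close>; where c equals both some a_m and some b_m',
  the value 1 (b-case) takes precedence.\<close>
definition hatA ::
  "(nat \<Rightarrow> nat \<Rightarrow> bool) \<Rightarrow> nat \<Rightarrow> nat \<Rightarrow> (nat \<Rightarrow> nat) \<Rightarrow> (nat \<Rightarrow> nat) \<Rightarrow> nat \<Rightarrow> bool" where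
  "hatA A i r a b c =
     (if c \<in> b ` {1..r} then True
      else if c \<in> a ` {1..r} then False
      else A i c)"

end

theory Submission
  imports Defs
begin

text \<open>A labeling of \<open>\<Delta>\<^sub>n\<^sub>+\<^sub>1\<close> is a root label together with \<open>k\<close> labelings of \<open>\<Delta>\<^sub>n\<close>, one per child,
  each compatible with the root.  Hence \<open>i \<Rightarrow>\<^sub>n\<^sub>+\<^sub>1 j\<close> as soon as every admissible child label \<open>c\<close>
  of \<open>i\<close> can be traded for an admissible child label \<open>c'\<close> of \<open>j\<close> with \<open>c \<Rightarrow>\<^sub>n c'\<close>.  The hypotheses
  provide such trades: \<open>c = a\<^sub>m\<close> is traded for \<open>b\<^sub>m\<close>, which \<open>A\<^sub>j\<close> admits because \<open>\<hat>A\<^sub>i(b\<^sub>m) = 1\<close>;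
  every other \<open>c\<close> is admitted by \<open>A\<^sub>j\<close> itself and is kept.\<close>

definition graft :: "nat \<Rightarrow> (nat \<Rightarrow> nat list \<Rightarrow> nat) \<Rightarrow> nat list \<Rightarrow> nat" where
  "graft q F x = (case x of [] \<Rightarrow> q | g # y \<Rightarrow> F g y)"

lemma implies_n_refl: "implies_n k d A n p p"
  unfolding implies_n_def by blast

lemma valid_labeling_subtree:
  assumes "valid_labeling k d A (Suc n) lam" "g \<in> {1..k}"
  shows "valid_labeling k d A n (\<lambda>x. lam (g # x))"
  unfolding valid_labeling_def
proof (intro conjI allI impI ballI)
  fix x assume "x \<in> Delta k n"
  then show "lam (g # x) \<in> {1..d}"
    using assms unfolding valid_labeling_def Delta_def by auto
next
  fix x h assume x: "length x < n \<and> set x \<subseteq> {1..k}" and h: "h \<in> {1..k}"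
  have "length (g # x) < Suc n \<and> set (g # x) \<subseteq> {1..k}" using x assms(2) by auto
  then show "A (lam (g # x)) (lam (g # x @ [h]))"
    using assms(1) h unfolding valid_labeling_def by (metis append_Cons)
qed

lemma valid_labeling_root_child:
  assumes "valid_labeling k d A (Suc n) lam" "g \<in> {1..k}"
  shows "lam [g] \<in> {1..d}" and "A (lam []) (lam [g])"
  using assms unfolding valid_labeling_def Delta_def
  by (auto dest: spec[of _ "[]"])

lemma valid_labeling_graft:
  assumes "q \<in> {1..d}"
    and "\<forall>g\<in>{1..k}. valid_labeling k d A n (F g) \<and> A q (F g [])"
  shows "valid_labeling k d A (Suc n) (graft q F)"
  unfolding valid_labeling_def
proof (intro conjI allI impI ballI)
  fix x assume x: "x \<in> Delta k (Suc n)"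
  show "graft q F x \<in> {1..d}"
  proof (cases x)
    case Nil
    then show ?thesis using assms(1) by (simp add: graft_def)
  next
    case (Cons g y)
    then have "g \<in> {1..k}" "y \<in> Delta k n" using x by (auto simp: Delta_def)
    then show ?thesis using assms(2) Cons unfolding graft_def valid_labeling_def by auto
  qed
next
  fix x h assume x: "length x < Suc n \<and> set x \<subseteq> {1..k}" and h: "h \<in> {1..k}"
  show "A (graft q F x) (graft q F (x @ [h]))"
  proof (cases x)
    case Nil
    then show ?thesis using assms(2) h by (simp add: graft_def)
  next
    case (Cons g y)
    then have "g \<in> {1..k}" "length y < n" "set y \<subseteq> {1..k}" using x by auto
    then show ?thesis using assms(2) Cons h unfolding graft_def valid_labeling_def by auto
  qed
qed

lemma graft_Lwords:
  assumes "\<forall>g\<in>{1..k}. \<forall>y\<in>Lwords k n. F g y = lam (g # y)"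
    and "x \<in> Lwords k (Suc n)"
  shows "graft q F x = lam x"
proof -
  obtain g y where x: "x = g # y" using assms(2) by (cases x) (auto simp: Lwords_def)
  then have "g \<in> {1..k}" "y \<in> Lwords k n" using assms(2) by (auto simp: Lwords_def)
  then show ?thesis using assms(1) x by (simp add: graft_def)
qed

lemma implies_n_SucI:
  assumes "q \<in> {1..d}"
    and trade: "\<And>c. c \<in> {1..d} \<Longrightarrow> A p c \<Longrightarrow> \<exists>c'. A q c' \<and> implies_n k d A n c c'"
  shows "implies_n k d A (Suc n) p q"
  unfolding implies_n_def
proof (intro allI impI)
  fix lam assume lam: "valid_labeling k d A (Suc n) lam \<and> lam [] = p"
  have "\<exists>f. (valid_labeling k d A n f \<and> A q (f [])) \<and> (\<forall>y\<in>Lwords k n. f y = lam (g # y))"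
    if g: "g \<in> {1..k}" for g
  proof -
    have "lam [g] \<in> {1..d}" "A p (lam [g])"
      using valid_labeling_root_child[OF _ g] lam by auto
    then obtain c' where "A q c'" "implies_n k d A n (lam [g]) c'"
      using trade by blast
    moreover have "valid_labeling k d A n (\<lambda>y. lam (g # y))"
      using valid_labeling_subtree lam g by blast
    ultimately show ?thesis unfolding implies_n_def by fastforce
  qed
  then obtain F where F: "\<forall>g\<in>{1..k}. valid_labeling k d A n (F g) \<and> A q (F g [])"
    and leaves: "\<forall>g\<in>{1..k}. \<forall>y\<in>Lwords k n. F g y = lam (g # y)"
    by metis
  show "\<exists>lam'. valid_labeling k d A (Suc n) lam' \<and> lam' [] = q \<and>
          (\<forall>x\<in>Lwords k (Suc n). lam' x = lam x)"
    using valid_labeling_graft[OF assms(1) F] graft_Lwords[OF leaves]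
    by (intro exI[of _ "graft q F"]) (simp add: graft_def)
qed

theorem proposition3p6:
  fixes k d n r i j :: nat and A :: "nat \<Rightarrow> nat \<Rightarrow> bool" and a b :: "nat \<Rightarrow> nat"
  assumes "k \<ge> 1" and "d \<ge> 1"
    and "i \<in> {1..d}" and "j \<in> {1..d}"
    and "\<forall>m\<in>{1..r}. a m \<in> {1..d} \<and> b m \<in> {1..d}"
    and "\<forall>m\<in>{1..r}. a m \<noteq> b m"
    and "\<forall>m\<in>{1..r}. implies_n k d A n (a m) (b m)"
    and "\<forall>m\<in>{1..r}. A i (a m)"
    and "\<forall>c\<in>{1..d}. c \<notin> a ` {1..r} \<longrightarrow> A i c \<le> A j c"
    and "\<forall>c\<in>{1..d}. hatA A i r a b c \<le> A j c"
  shows "implies_n k d A (Suc n) i j"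
proof (rule implies_n_SucI[OF \<open>j \<in> {1..d}\<close>])
  fix c assume c: "c \<in> {1..d}" "A i c"
  show "\<exists>c'. A j c' \<and> implies_n k d A n c c'"
  proof (cases "c \<in> a ` {1..r}")
    case True
    then obtain m where m: "m \<in> {1..r}" "c = a m" by blast
    have "hatA A i r a b (b m)" using m(1) unfolding hatA_def by auto
    then have "A j (b m)" using assms(5,10) m(1) by fastforce
    then show ?thesis using assms(7) m by blast
  next
    case False
    then have "A j c" using assms(9) c by fastforce
    then show ?thesis using implies_n_refl by blast
  qed
qed

end
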